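(* Let $\mathcal X=\mathcal X_1\times\cdots\times\mathcal X_b$, $\mathcal X_i=\mathbb R^{m_i\times n_i}$ with trace inner product and arbitrary norms $\|\cdot\|_{(i)}$ (dual norms $\|\cdot\|_{(i)\star}$). Let $f:\mathcal X\to\mathbb R$ be continuously differentiable with $f\ge f^\star$. Let $\mathcal D$ be a probability distribution on subsets of $[b]$ and assume there are constants $L^0_{i,S},L^1_{i,S}\ge0$ ($S\in\operatorname{supp}(\mathcal D)$) such that for every $S\in\operatorname{supp}(\mathcal D)$, $X\in\mathcal X$ and $\Gamma$ with $\Gamma_i=0$ for $i\notin S$, $$f(X+\Gamma)-f(X)-\langle\nabla f(X),\Gamma\rangle\le\sum_{i\in S}\frac{L^0_{i,S}+L^1_{i,S}\|\nabla_if(X)\|_{(i)\star}}2\|\Gamma_i\|_{(i)}^2.$$ Fix $\varepsilon>0$. From $X^0$, for $k=0,1,\dots$ draw $S^k\sim\mathcal D$ i.i.d., set $X_i^{k+1}=X_i^k-\gamma_i^k(\nabla_if(X^k))^\sharp$ for $i\in S^k$ and $X_i^{k+1}=X_i^k$ otherwise, with $\gamma_i^k=(L^0_{i,S^k}+L^1_{i,S^k}\|\nabla_if(X^k)\|_{(i)\star})^{-1}$. Let $\hat S\sim\mathcal D$, $\delta^0=f(X^0)-f^\star$ and $w_i=\dfrac{\Pr(i\in\hat S)}{\mathbb E[L^1_{i,\hat S}\mid i\in\hat S]}$. Then to guarantee $$\min_{k=0,\dots,K-1}\sum_{i=1}^b\frac{w_i}{\frac1b\sum_{l=1}^bw_l}\mathbb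 E\big[\|\nabla_if(X^k)\|_{(i)\star}\big]\le\varepsilon,$$ it suffices to run the method for $$K=\left\lceil\frac{2\delta^0\sum_{i=1}^b\frac{\Pr(i\in\hat S)\,\mathbb E[L^0_{i,\hat S}\mid i\in\hat S]}{\left(\mathbb E[L^1_{i,\hat S}\mid i\in\hat S]\right)^2}}{\varepsilon^2\left(\frac1b\sum_{l=1}^bw_l\right)^2}+\frac{2\delta^0}{\varepsilon\left(\frac1b\sum_{l=1}^bw_l\right)}\right\rceil$$ iterations.
   Context: $\operatorname{supp}(\mathcal D)$ is the collection of subsets of $[b]$ with positive probability. For $G\in\mathcal X_i$, $G^\sharp$ is an element of $\arg\max_Z\{\langle G,Z\rangle-\frac12\|Z\|_{(i)}^2\}$. Expectations are over the random sets $S^k$. *)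

theory Defs
  imports "HOL-Probability.Probability"
begin

text \<open>Matrices in R^(m x n) are represented as functions nat => nat => real vanishing
outside the index range r < m, c < n.\<close>

definition Mat :: "nat \<Rightarrow> nat \<Rightarrow> (nat \<Rightarrow> nat \<Rightarrow> real) set" where
  "Mat m n = {A. \<forall>r c. (m \<le> r \<or> n \<le> c) \<longrightarrow> A r c = 0}"

definition frob :: "nat \<Rightarrow> nat \<Rightarrow> (nat \<Rightarrow> nat \<Rightarrow> real) \<Rightarrow> (nat \<Rightarrow> nat \<Rightarrow> real) \<Rightarrow> real" where
  "frob m n A B = (\<Sum>r<m. \<Sum>c<n. A r c * B r c)"

definition is_mat_norm :: "((nat \<Rightarrow> nat \<Rightarrow> real) \<Rightarrow> real) \<Rightarrow> nat \<Rightarrow> nat \<Rightarrow> bool" where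
  "is_mat_norm N m n \<longleftrightarrow>
     (\<forall>A\<in>Mat m n. 0 \<le> N A) \<and>
     (\<forall>A\<in>Mat m n. N A = 0 \<longleftrightarrow> (\<forall>r c. A r c = 0)) \<and>
     (\<forall>A\<in>Mat m n. \<forall>B\<in>Mat m n. N (\<lambda>r c. A r c + B r c) \<le> N A + N B) \<and>
     (\<forall>A\<in>Mat m n. \<forall>t::real. N (\<lambda>r c. t * A r c) = \<bar>t\<bar> * N A)"

definition dual_norm :: "((nat \<Rightarrow> nat \<Rightarrow> real) \<Rightarrow> real) \<Rightarrow> nat \<Rightarrow> nat \<Rightarrow> (nat \<Rightarrow> nat \<Rightarrow> real) \<Rightarrow> real" where
  "dual_norm N m n G = Sup {frob m n G Z | Z. Z \<in> Mat m n \<and> N Z \<le> 1}"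

definition is_sharp :: "((nat \<Rightarrow> nat \<Rightarrow> real) \<Rightarrow> real) \<Rightarrow> nat \<Rightarrow> nat
    \<Rightarrow> ((nat \<Rightarrow> nat \<Rightarrow> real) \<Rightarrow> (nat \<Rightarrow> nat \<Rightarrow> real)) \<Rightarrow> bool" where
  "is_sharp N m n s \<longleftrightarrow>
     (\<forall>G\<in>Mat m n. s G \<in> Mat m n \<and>
        (\<forall>Z\<in>Mat m n. frob m n G Z - (N Z)\<^sup>2 / 2 \<le> frob m n G (s G) - (N (s G))\<^sup>2 / 2))"

text \<open>The product space X_1 x ... x X_b (blocks indexed 0..b-1) is represented as real^'k,
where e :: 'k => nat x nat x nat is a bijection onto {(i,r,c). i<b, r<m i, c<n i}:
coordinate k is entry (r,c) of block i. The standard inner product on real^'k is then the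
sum of the blockwise trace inner products. blk extracts block i as a matrix.\<close>
definition blk :: "('k \<Rightarrow> nat \<times> nat \<times> nat) \<Rightarrow> (nat \<Rightarrow> nat) \<Rightarrow> (nat \<Rightarrow> nat)
    \<Rightarrow> real^'k \<Rightarrow> nat \<Rightarrow> (nat \<Rightarrow> nat \<Rightarrow> real)" where
  "blk e m n X i = (\<lambda>r c. if r < m i \<and> c < n i then X $ (inv e (i, r, c)) else 0)"

definition bcd_step :: "('k \<Rightarrow> nat \<times> nat \<times> nat) \<Rightarrow> (nat \<Rightarrow> nat) \<Rightarrow> (nat \<Rightarrow> nat)
    \<Rightarrow> (nat \<Rightarrow> (nat \<Rightarrow> nat \<Rightarrow> real) \<Rightarrow> real)
    \<Rightarrow> (nat \<Rightarrow> (nat \<Rightarrow> nat \<Rightarrow> real) \<Rightarrow> (nat \<Rightarrow> nat \<Rightarrow> real))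
    \<Rightarrow> (real^'k \<Rightarrow> real^'k) \<Rightarrow> (nat \<Rightarrow> nat set \<Rightarrow> real) \<Rightarrow> (nat \<Rightarrow> nat set \<Rightarrow> real)
    \<Rightarrow> nat set \<Rightarrow> real^'k \<Rightarrow> real^'k" where
  "bcd_step e m n nrm sharp grad L0 L1 S X =
     (\<chi> k. (case e k of (i, r, c) \<Rightarrow>
        if i \<in> S then
          X $ k - inverse (L0 i S + L1 i S * dual_norm (nrm i) (m i) (n i) (blk e m n (grad X) i))
                  * sharp i (blk e m n (grad X) i) r c
        else X $ k))"

primrec bcd_iter :: "('k \<Rightarrow> nat \<times> nat \<times> nat) \<Rightarrow> (nat \<Rightarrow> nat) \<Rightarrow> (nat \<Rightarrow> nat)
    \<Rightarrow> (nat \<Rightarrow> (nat \<Rightarrow> nat \<Rightarrow> real) \<Rightarrow> real)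
    \<Rightarrow> (nat \<Rightarrow> (nat \<Rightarrow> nat \<Rightarrow> real) \<Rightarrow> (nat \<Rightarrow> nat \<Rightarrow> real))
    \<Rightarrow> (real^'k \<Rightarrow> real^'k) \<Rightarrow> (nat \<Rightarrow> nat set \<Rightarrow> real) \<Rightarrow> (nat \<Rightarrow> nat set \<Rightarrow> real)
    \<Rightarrow> real^'k \<Rightarrow> nat set stream \<Rightarrow> nat \<Rightarrow> real^'k" where
  "bcd_iter e m n nrm sharp grad L0 L1 X0 \<omega> 0 = X0"
| "bcd_iter e m n nrm sharp grad L0 L1 X0 \<omega> (Suc k) =
     bcd_step e m n nrm sharp grad L0 L1 (\<omega> !! k) (bcd_iter e m n nrm sharp grad L0 L1 X0 \<omega> k)"

definition pin :: "nat set pmf \<Rightarrow> nat \<Rightarrow> real" where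
  "pin D i = measure_pmf.prob D {S. i \<in> S}"

definition cexp :: "nat set pmf \<Rightarrow> (nat set \<Rightarrow> real) \<Rightarrow> nat \<Rightarrow> real" where
  "cexp D g i = measure_pmf.expectation (cond_pmf D {S. i \<in> S}) g"

end

theory Submission
  imports Defs
begin

text \<open>
  A step moves each sampled block i by \<open>-G\<^sub>i\<^sup>\<sharp> / c\<^sub>i\<close> with
  \<open>c\<^sub>i = L\<^sup>0\<^sub>i\<^sub>,\<^sub>S + L\<^sup>1\<^sub>i\<^sub>,\<^sub>S d\<^sub>i\<close> and \<open>d\<^sub>i = \<parallel>G\<^sub>i\<parallel>\<^sub>*\<close>. Since the sharp satisfies
  \<open>\<langle>G, G\<^sup>\<sharp>\<rangle> - \<parallel>G\<^sup>\<sharp>\<parallel>\<^sup>2/2 \<ge> \<parallel>G\<parallel>\<^sub>*\<^sup>2/2\<close>, the smoothness inequality makes f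
  drop by at least \<open>\<Sum>\<^sub>i\<^sub>\<in>\<^sub>S d\<^sub>i\<^sup>2 / (2 c\<^sub>i)\<close>, and the expected drops over K steps add
  up to at most \<open>\<delta>\<^sup>0\<close>. The tangent inequality \<open>2\<lambda>d - \<lambda>\<^sup>2c \<le> d\<^sup>2/c\<close> with
  \<open>\<lambda>\<^sub>i = \<mu> / E[L\<^sup>1\<^sub>i\<^sub>,\<^sub>S | i \<in> S]\<close> bounds the expected drop from below by
  \<open>((2\<mu> - \<mu>\<^sup>2) \<Sum>\<^sub>i w\<^sub>i E d\<^sub>i - \<mu>\<^sup>2 C) / 2\<close>, where C is the sum in the first term of K.
  If the weighted expected gradient norm exceeded \<open>t = \<epsilon> W\<close> at all K iterates, the choice
  \<open>\<mu> = t / (C + t)\<close> would make the drops add up to more than \<open>K t\<^sup>2 / (2 (C + t)) \<ge> \<delta>\<^sup>0\<close>.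
\<close>

section \<open>Expectations along random iterations\<close>

text \<open>The expected value of h after k steps \<open>X := step S X\<close> with S drawn i.i.d. from D,
  written as a finite sum (D will have finite support), so that it needs no measurability.\<close>

primrec expect_iter :: "'s pmf \<Rightarrow> ('s \<Rightarrow> 'a \<Rightarrow> 'a) \<Rightarrow> nat \<Rightarrow> ('a \<Rightarrow> real) \<Rightarrow> 'a \<Rightarrow> real" where
  "expect_iter D step 0 h X = h X"
| "expect_iter D step (Suc k) h X = (\<Sum>S\<in>set_pmf D. pmf D S * expect_iter D step k h (step S X))"

lemma expect_iter_nonneg: "(\<And>X. 0 \<le> h X) \<Longrightarrow> 0 \<le> expect_iter D step k h X"
  by (induction k arbitrary: X) (auto intro!: sum_nonneg)

lemma expect_iter_mono: "(\<And>X. h X \<le> h' X) \<Longrightarrow> expect_iter D step k h X \<le> expect_iter D step k h' X"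
  by (induction k arbitrary: X) (auto intro!: sum_mono mult_left_mono)

lemma expect_iter_add:
  "expect_iter D step k (\<lambda>X. h X + h' X) X = expect_iter D step k h X + expect_iter D step k h' X"
  by (induction k arbitrary: X) (auto simp: sum.distrib distrib_left)

lemma expect_iter_cmult: "expect_iter D step k (\<lambda>X. a * h X) X = a * expect_iter D step k h X"
  by (induction k arbitrary: X) (auto simp: sum_distrib_left algebra_simps)

lemma expect_iter_sum:
  "finite I \<Longrightarrow> expect_iter D step k (\<lambda>X. \<Sum>i\<in>I. h i X) X = (\<Sum>i\<in>I. expect_iter D step k (h i) X)"
  by (induction k arbitrary: X) (auto simp: sum_distrib_left intro: sum.swap)

lemma expect_iter_const: "finite (set_pmf D) \<Longrightarrow> expect_iter D step k (\<lambda>X. c) X = c"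
  by (induction k arbitrary: X) (simp_all add: sum_distrib_right[symmetric] sum_pmf_eq_1)

lemma sum_expect_iter_decrease_le:
  assumes fin: "finite (set_pmf D)"
    and decrease: "\<And>S X. S \<in> set_pmf D \<Longrightarrow> F (step S X) \<le> F X - \<phi> S X"
    and lower: "\<And>X. Fmin \<le> F X"
  shows "(\<Sum>j<K. expect_iter D step j (\<lambda>X. \<Sum>S\<in>set_pmf D. pmf D S * \<phi> S X) X0) \<le> F X0 - Fmin"
proof (induction K arbitrary: X0)
  case 0
  then show ?case using lower by simp
next
  case (Suc K)
  define \<psi> where "\<psi> X = (\<Sum>S\<in>set_pmf D. pmf D S * \<phi> S X)" for X
  have "(\<Sum>j<Suc K. expect_iter D step j \<psi> X0)
      = \<psi> X0 + (\<Sum>S\<in>set_pmf D. pmf D S * (\<Sum>j<K. expect_iter D step j \<psi> (step S X0)))"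
    unfolding sum.lessThan_Suc_shift by (simp add: sum_distrib_left) (rule sum.swap)
  also have "\<dots> \<le> \<psi> X0 + (\<Sum>S\<in>set_pmf D. pmf D S * (F X0 - \<phi> S X0 - Fmin))"
  proof (intro add_left_mono sum_mono mult_left_mono)
    fix S assume "S \<in> set_pmf D"
    then show "(\<Sum>j<K. expect_iter D step j \<psi> (step S X0)) \<le> F X0 - \<phi> S X0 - Fmin"
      using Suc[of "step S X0"] decrease[of S X0] unfolding \<psi>_def by linarith
  qed simp
  also have "\<dots> = (\<Sum>S\<in>set_pmf D. pmf D S) * (F X0 - Fmin)"
    by (simp add: \<psi>_def algebra_simps sum_subtractf sum.distrib sum_distrib_left sum_distrib_right)
  also have "\<dots> = F X0 - Fmin"
    using fin by (simp add: sum_pmf_eq_1)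
  finally show ?case unfolding \<psi>_def .
qed

lemma nn_integral_fold_stream:
  assumes fin: "finite (set_pmf D)" and nonneg: "\<And>y. 0 \<le> h y"
    and meas: "(\<lambda>\<omega>. ennreal (h (fold step (stake k \<omega>) x))) \<in> borel_measurable (stream_space (measure_pmf D))"
  shows "(\<integral>\<^sup>+\<omega>. ennreal (h (fold step (stake k \<omega>) x)) \<partial>stream_space (measure_pmf D))
       = ennreal (expect_iter D step k h x)"
  using meas
proof (induction k arbitrary: x)
  case 0
  interpret prob_space "stream_space (measure_pmf D)"
    by (rule prob_space.prob_space_stream_space) (rule prob_space_measure_pmf)
  show ?case by (simp add: emeasure_space_1)
next
  case (Suc k)
  have "(\<integral>\<^sup>+\<omega>. ennreal (h (fold step (stake (Suc k) \<omega>) x)) \<partial>stream_space (measure_pmf D))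
     = (\<integral>\<^sup>+S. (\<integral>\<^sup>+\<omega>. ennreal (h (fold step (stake k \<omega>) (step S x))) \<partial>stream_space (measure_pmf D))
          \<partial>measure_pmf D)"
    using prob_space.nn_integral_stream_space[OF prob_space_measure_pmf Suc.prems] by simp
  also have "\<dots> = (\<integral>\<^sup>+S. ennreal (expect_iter D step k h (step S x)) \<partial>measure_pmf D)"
  proof (rule nn_integral_cong, rule Suc.IH)
    fix S
    show "(\<lambda>\<omega>. ennreal (h (fold step (stake k \<omega>) (step S x)))) \<in> borel_measurable (stream_space (measure_pmf D))"
      using measurable_compose[OF measurable_Stream[OF measurable_const measurable_ident_sets] Suc.prems, of S]
      by (simp add: comp_def)
  qed
  also have "\<dots> = ennreal (expect_iter D step (Suc k) h x)"
    using fin by (simp add: nn_integral_measure_pmf_finite ennreal_mult[symmetric]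
        expect_iter_nonneg nonneg sum_ennreal mult.commute)
  finally show ?case .
qed

text \<open>The Bochner integral of a non-integrable function is 0, so without any measurability
  of the iterates only an upper bound holds.\<close>

lemma integral_fold_stream_le:
  assumes fin: "finite (set_pmf D)" and nonneg: "\<And>y. 0 \<le> h y"
  shows "(\<integral>\<omega>. h (fold step (stake k \<omega>) x) \<partial>stream_space (measure_pmf D)) \<le> expect_iter D step k h x"
proof (cases "(\<lambda>\<omega>. h (fold step (stake k \<omega>) x)) \<in> borel_measurable (stream_space (measure_pmf D))")
  case True
  then have meas: "(\<lambda>\<omega>. ennreal (h (fold step (stake k \<omega>) x))) \<in> borel_measurable (stream_space (measure_pmf D))"
    by measurable
  have "(\<integral>\<omega>. h (fold step (stake k \<omega>) x) \<partial>stream_space (measure_pmf D))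
      = enn2real (\<integral>\<^sup>+\<omega>. ennreal (h (fold step (stake k \<omega>) x)) \<partial>stream_space (measure_pmf D))"
    by (rule integral_eq_nn_integral[OF True]) (simp add: nonneg)
  also have "\<dots> = expect_iter D step k h x"
    unfolding nn_integral_fold_stream[OF fin nonneg meas] using expect_iter_nonneg[of h D step k x, OF nonneg] by simp
  finally show ?thesis by simp
next
  case False
  then have "\<not> integrable (stream_space (measure_pmf D)) (\<lambda>\<omega>. h (fold step (stake k \<omega>) x))"
    by blast
  then show ?thesis
    by (simp add: not_integrable_integral_eq expect_iter_nonneg nonneg)
qed

lemma pin_eq_sum:
  assumes "finite (set_pmf D)"
  shows "pin D i = (\<Sum>S\<in>set_pmf D. pmf D S * (if i \<in> S then 1 else 0))"
proof -
  have "pin D i = measure (measure_pmf D) (set_pmf D \<inter> {S. i \<in> S})"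
    unfolding pin_def by (metis measure_Int_set_pmf Int_commute)
  also have "\<dots> = (\<Sum>S\<in>set_pmf D \<inter> {S. i \<in> S}. pmf D S)"
    using assms by (simp add: measure_measure_pmf_finite)
  finally show ?thesis
    using assms by (simp add: sum.inter_restrict if_distrib cong: if_cong)
qed

lemma pin_mult_cexp_eq_sum:
  assumes fin: "finite (set_pmf D)" and pos: "0 < pin D i"
  shows "pin D i * cexp D g i = (\<Sum>S\<in>set_pmf D. pmf D S * (if i \<in> S then g S else 0))"
proof -
  have ne: "set_pmf D \<inter> {S. i \<in> S} \<noteq> {}"
    using pos unfolding pin_def by (metis measure_Int_set_pmf measure_empty Int_commute less_irrefl)
  have "cexp D g i = (\<Sum>S\<in>set_pmf D \<inter> {S. i \<in> S}. g S * pmf (cond_pmf D {S. i \<in> S}) S)"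
    unfolding cexp_def
    by (rule integral_measure_pmf_real) (use fin ne in \<open>auto simp: set_cond_pmf\<close>)
  also have "\<dots> = (\<Sum>S\<in>set_pmf D \<inter> {S. i \<in> S}. g S * pmf D S) / pin D i"
    by (simp add: pmf_cond[OF ne] sum_divide_distrib pin_def)
  finally show ?thesis
    using fin pos by (simp add: sum.inter_restrict mult.commute if_distrib cong: if_cong)
qed

lemma expect_block_quadratic:
  assumes fin: "finite (set_pmf D)" and pos: "0 < pin D i"
  shows "(\<Sum>S\<in>set_pmf D. pmf D S * (if i \<in> S then 2 * l * d - l\<^sup>2 * (g0 S + g1 S * d) else 0))
       = pin D i * (2 * l * d - l\<^sup>2 * (cexp D g0 i + cexp D g1 i * d))"
proof -
  have "(\<Sum>S\<in>set_pmf D. pmf D S * (if i \<in> S then 2 * l * d - l\<^sup>2 * (g0 S + g1 S * d) else 0))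
     = 2 * l * d * (\<Sum>S\<in>set_pmf D. pmf D S * (if i \<in> S then 1 else 0))
       - l\<^sup>2 * (\<Sum>S\<in>set_pmf D. pmf D S * (if i \<in> S then g0 S else 0))
       - l\<^sup>2 * d * (\<Sum>S\<in>set_pmf D. pmf D S * (if i \<in> S then g1 S else 0))"
  proof -
    have "(\<Sum>S\<in>set_pmf D. pmf D S * (if i \<in> S then 2 * l * d - l\<^sup>2 * (g0 S + g1 S * d) else 0))
       = (\<Sum>S\<in>set_pmf D. 2 * l * d * (pmf D S * (if i \<in> S then 1 else 0))
           - l\<^sup>2 * (pmf D S * (if i \<in> S then g0 S else 0))
           - l\<^sup>2 * d * (pmf D S * (if i \<in> S then g1 S else 0)))"
      by (rule sum.cong) (auto simp: algebra_simps)
    then show ?thesis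
      by (simp add: sum_subtractf sum_distrib_left)
  qed
  also have "\<dots> = pin D i * (2 * l * d - l\<^sup>2 * (cexp D g0 i + cexp D g1 i * d))"
    by (simp add: pin_eq_sum[OF fin, symmetric] pin_mult_cexp_eq_sum[OF fin pos, symmetric] algebra_simps)
  finally show ?thesis .
qed

section \<open>Norms, dual norms and sharp operators\<close>

lemma zero_in_Mat: "(\<lambda>r c. 0) \<in> Mat m n"
  by (simp add: Mat_def)

lemma scale_in_Mat: "Z \<in> Mat m n \<Longrightarrow> (\<lambda>r c. t * Z r c) \<in> Mat m n"
  by (simp add: Mat_def)

lemma blk_in_Mat: "blk e m n X i \<in> Mat (m i) (n i)"
  by (simp add: blk_def Mat_def)

lemma frob_scale_right: "frob m n G (\<lambda>r c. t * Z r c) = t * frob m n G Z"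
  unfolding frob_def by (simp add: sum_distrib_left algebra_simps)

lemma frob_zero_right: "frob m n G (\<lambda>r c. 0) = 0"
  unfolding frob_def by simp

lemma mat_norm_nonneg: "is_mat_norm N m n \<Longrightarrow> Z \<in> Mat m n \<Longrightarrow> 0 \<le> N Z"
  unfolding is_mat_norm_def by blast

lemma mat_norm_zero: "is_mat_norm N m n \<Longrightarrow> N (\<lambda>r c. 0) = 0"
  using zero_in_Mat unfolding is_mat_norm_def by blast

lemma mat_norm_scale: "is_mat_norm N m n \<Longrightarrow> Z \<in> Mat m n \<Longrightarrow> N (\<lambda>r c. t * Z r c) = \<bar>t\<bar> * N Z"
  unfolding is_mat_norm_def by blast

text \<open>Test the optimality of the sharp against the rescaled competitor \<open>\<langle>G, Z\<rangle> Z\<close>.\<close>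

lemma frob_sq_le_sharp_value:
  assumes N: "is_mat_norm N m n" and sh: "is_sharp N m n s"
    and G: "G \<in> Mat m n" and Z: "Z \<in> Mat m n" "N Z \<le> 1"
  shows "(frob m n G Z)\<^sup>2 \<le> 2 * frob m n G (s G) - (N (s G))\<^sup>2"
proof -
  define a where "a = frob m n G Z"
  have "frob m n G (\<lambda>r c. a * Z r c) - (N (\<lambda>r c. a * Z r c))\<^sup>2 / 2
      \<le> frob m n G (s G) - (N (s G))\<^sup>2 / 2"
    using sh G scale_in_Mat[OF Z(1)] unfolding is_sharp_def by blast
  moreover have "(N (\<lambda>r c. a * Z r c))\<^sup>2 \<le> a\<^sup>2"
    using Z mat_norm_nonneg[OF N Z(1)]
    by (simp add: mat_norm_scale[OF N Z(1)] power_mult_distrib mult_left_le power_le_one)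
  ultimately show ?thesis
    by (simp add: frob_scale_right a_def power2_eq_square)
qed

lemma
  assumes N: "is_mat_norm N m n" and sh: "is_sharp N m n s" and G: "G \<in> Mat m n"
  shows dual_norm_nonneg: "0 \<le> dual_norm N m n G"
    and dual_norm_sq_le_sharp_value: "(dual_norm N m n G)\<^sup>2 \<le> 2 * frob m n G (s G) - (N (s G))\<^sup>2"
proof -
  define A where "A = {frob m n G Z | Z. Z \<in> Mat m n \<and> N Z \<le> 1}"
  define M where "M = 2 * frob m n G (s G) - (N (s G))\<^sup>2"
  have bound: "a \<le> sqrt M" if "a \<in> A" for a
    using that frob_sq_le_sharp_value[OF N sh G] unfolding A_def M_def
    by (auto intro: real_le_rsqrt)
  have "0 \<in> A"
    unfolding A_def using zero_in_Mat mat_norm_zero[OF N] frob_zero_right by force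
  then have "0 \<le> Sup A" and "Sup A \<le> sqrt M"
    using bound by (auto intro!: cSup_upper cSup_least bdd_aboveI)
  moreover have "0 \<le> M"
    using frob_sq_le_sharp_value[OF N sh G zero_in_Mat] mat_norm_zero[OF N] frob_zero_right
    by (simp add: M_def)
  ultimately show "0 \<le> dual_norm N m n G" and "(dual_norm N m n G)\<^sup>2 \<le> 2 * frob m n G (s G) - (N (s G))\<^sup>2"
    unfolding dual_norm_def A_def[symmetric] M_def[symmetric]
    by (auto intro: order_trans[OF power_mono[of _ _ 2]])
qed

text \<open>For \<open>c = 0\<close> both sides vanish, because \<open>inverse 0 = 0\<close> and \<open>x / 0 = 0\<close>.\<close>

lemma sharp_step_gain:
  assumes N: "is_mat_norm N m n" and sh: "is_sharp N m n s" and G: "G \<in> Mat m n" and c: "0 \<le> c"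
  shows "frob m n G (\<lambda>r c'. (- inverse c) * s G r c') + c / 2 * (N (\<lambda>r c'. (- inverse c) * s G r c'))\<^sup>2
       \<le> - ((dual_norm N m n G)\<^sup>2 / (2 * c))"
proof (cases "c = 0")
  case True
  then show ?thesis
    using frob_zero_right[of m n G] by simp
next
  case False
  have "s G \<in> Mat m n"
    using sh G unfolding is_sharp_def by blast
  then have norm_step: "N (\<lambda>r c'. (- inverse c) * s G r c') = inverse c * N (s G)"
    using mat_norm_scale[OF N, of "s G" "- inverse c"] c by simp
  have "frob m n G (\<lambda>r c'. (- inverse c) * s G r c') + c / 2 * (N (\<lambda>r c'. (- inverse c) * s G r c'))\<^sup>2
      = - ((2 * frob m n G (s G) - (N (s G))\<^sup>2) / (2 * c))"
    unfolding norm_step frob_scale_right using False by (simp add: field_simps power2_eq_square)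
  also have "\<dots> \<le> - ((dual_norm N m n G)\<^sup>2 / (2 * c))"
    using dual_norm_sq_le_sharp_value[OF N sh G] c by (intro le_imp_neg_le divide_right_mono) auto
  finally show ?thesis .
qed

lemma quadratic_le_sq_div:
  fixes c d l :: real
  assumes "0 \<le> d" "0 \<le> c" "0 < d \<Longrightarrow> 0 < c"
  shows "2 * l * d - l\<^sup>2 * c \<le> d\<^sup>2 / c"
proof (cases "d = 0")
  case True
  then show ?thesis using assms by simp
next
  case False
  then have "0 < c" using assms by simp
  moreover have "0 \<le> (d - l * c)\<^sup>2 / c" using \<open>0 < c\<close> by simp
  ultimately show ?thesis
    by (simp add: field_simps power2_eq_square)
qed

lemma ex_le_of_sum_quadratic_le:
  fixes a :: "nat \<Rightarrow> real" and C t \<delta> :: real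
  assumes C: "0 \<le> C" and t: "0 < t" and K: "0 < K"
    and K_bound: "2 * \<delta> * (C + t) \<le> real K * t\<^sup>2"
    and sum_le: "\<And>\<mu>. (\<Sum>j<K. (2 * \<mu> - \<mu>\<^sup>2) * a j - \<mu>\<^sup>2 * C) \<le> 2 * \<delta>"
  shows "\<exists>j<K. a j \<le> t"
proof (rule ccontr)
  assume "\<not> (\<exists>j<K. a j \<le> t)"
  then have gt: "t < a j" if "j < K" for j
    using that by auto
  \<comment> \<open>the maximiser of \<open>(2\<mu> - \<mu>\<^sup>2) t - \<mu>\<^sup>2 C\<close>\<close>
  define \<mu> where "\<mu> = t / (C + t)"
  have "0 < \<mu>" "\<mu> \<le> 1"
    using C t by (auto simp: \<mu>_def)
  then have "0 < 2 * \<mu> - \<mu>\<^sup>2"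
    by (simp add: power2_eq_square algebra_simps)
  have "\<mu> * (C + t) = t"
    using C t by (simp add: \<mu>_def)
  moreover have "(2 * \<mu> - \<mu>\<^sup>2) * t - \<mu>\<^sup>2 * C = 2 * \<mu> * t - \<mu> * (\<mu> * (C + t))"
    by (simp add: power2_eq_square algebra_simps)
  ultimately have "(2 * \<mu> - \<mu>\<^sup>2) * t - \<mu>\<^sup>2 * C = \<mu> * t"
    by simp
  then have "(2 * \<mu> - \<mu>\<^sup>2) * t - \<mu>\<^sup>2 * C = t\<^sup>2 / (C + t)"
    by (simp add: \<mu>_def power2_eq_square)
  then have "real K * (t\<^sup>2 / (C + t)) = (\<Sum>j<K. (2 * \<mu> - \<mu>\<^sup>2) * t - \<mu>\<^sup>2 * C)"
    by simp
  also have "\<dots> < (\<Sum>j<K. (2 * \<mu> - \<mu>\<^sup>2) * a j - \<mu>\<^sup>2 * C)"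
    using K gt \<open>0 < 2 * \<mu> - \<mu>\<^sup>2\<close> by (intro sum_strict_mono) auto
  also have "\<dots> \<le> 2 * \<delta>"
    by (rule sum_le)
  finally show False
    using K_bound C t by (simp add: field_simps)
qed

locale block_coords =
  fixes b :: nat and m n :: "nat \<Rightarrow> nat" and e :: "'k::finite \<Rightarrow> nat \<times> nat \<times> nat"
  assumes e_bij: "bij_betw e UNIV {(i, r, c). i < b \<and> r < m i \<and> c < n i}"
begin

definition assemble :: "(nat \<Rightarrow> nat \<Rightarrow> nat \<Rightarrow> real) \<Rightarrow> real^'k" where
  "assemble B = (\<chi> k. case e k of (i, r, c) \<Rightarrow> B i r c)"

lemma blk_assemble:
  assumes "i < b" "B i \<in> Mat (m i) (n i)"
  shows "blk e m n (assemble B) i = B i"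
proof (intro ext)
  fix r c
  show "blk e m n (assemble B) i r c = B i r c"
  proof (cases "r < m i \<and> c < n i")
    case True
    then have "e (inv e (i, r, c)) = (i, r, c)"
      using assms(1) e_bij by (intro bij_betw_inv_into_right) auto
    then show ?thesis using True by (simp add: blk_def assemble_def)
  next
    case False
    then show ?thesis using assms(2) by (auto simp: blk_def Mat_def)
  qed
qed

lemma inner_assemble: "x \<bullet> assemble B = (\<Sum>i<b. frob (m i) (n i) (blk e m n x i) (B i))"
proof -
  let ?T = "{(i, r, c). i < b \<and> r < m i \<and> c < n i}"
  let ?g = "\<lambda>t. x $ inv e t * (case t of (i, r, c) \<Rightarrow> B i r c)"
  have "x \<bullet> assemble B = (\<Sum>k\<in>UNIV. ?g (e k))"
    unfolding inner_vec_def assemble_def using e_bij by (simp add: bij_betw_def)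
  also have "\<dots> = sum ?g ?T"
    by (rule sum.reindex_bij_betw[OF e_bij])
  also have "?T = Sigma {..<b} (\<lambda>i. Sigma {..<m i} (\<lambda>r. {..<n i}))"
    by auto
  also have "sum ?g (Sigma {..<b} (\<lambda>i. Sigma {..<m i} (\<lambda>r. {..<n i})))
      = (\<Sum>i<b. \<Sum>(r, c)\<in>Sigma {..<m i} (\<lambda>r. {..<n i}). x $ inv e (i, r, c) * B i r c)"
    by (subst sum.Sigma) (auto simp: case_prod_beta)
  also have "\<dots> = (\<Sum>i<b. \<Sum>r<m i. \<Sum>c<n i. x $ inv e (i, r, c) * B i r c)"
    by (subst sum.Sigma) (auto simp: case_prod_beta)
  also have "\<dots> = (\<Sum>i<b. frob (m i) (n i) (blk e m n x i) (B i))"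
    unfolding frob_def blk_def by simp
  finally show ?thesis .
qed

lemma assemble_outside: "fst (e k) \<notin> S \<Longrightarrow> assemble (\<lambda>i. if i \<in> S then B i else (\<lambda>r c. 0)) $ k = 0"
  unfolding assemble_def by (auto split: prod.splits)

end

section \<open>The randomized block method\<close>

lemma bcd_iter_eq_fold:
  "bcd_iter e m n nrm sharp grad L0 L1 X0 \<omega> k = fold (bcd_step e m n nrm sharp grad L0 L1) (stake k \<omega>) X0"
proof (induction k)
  case (Suc k)
  have "stake (Suc k) \<omega> = stake k \<omega> @ [\<omega> !! k]"
    using stake_add[of k \<omega> 1] by simp
  then show ?case using Suc by simp
qed simp

locale block_descent = block_coords b m n e
  for b and m n and e :: "'k::finite \<Rightarrow> nat \<times> nat \<times> nat" +
  fixes nrm :: "nat \<Rightarrow> (nat \<Rightarrow> nat \<Rightarrow> real) \<Rightarrow> real"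
    and sharp :: "nat \<Rightarrow> (nat \<Rightarrow> nat \<Rightarrow> real) \<Rightarrow> (nat \<Rightarrow> nat \<Rightarrow> real)"
    and f :: "real^'k \<Rightarrow> real" and grad :: "real^'k \<Rightarrow> real^'k" and fstar :: real
    and D :: "nat set pmf" and L0 L1 :: "nat \<Rightarrow> nat set \<Rightarrow> real"
  assumes norms: "\<forall>i<b. is_mat_norm (nrm i) (m i) (n i)"
    and sharps: "\<forall>i<b. is_sharp (nrm i) (m i) (n i) (sharp i)"
    and lower: "\<forall>X. fstar \<le> f X"
    and D_sets: "set_pmf D \<subseteq> Pow {..<b}"
    and L_nonneg: "\<forall>S\<in>set_pmf D. \<forall>i<b. 0 \<le> L0 i S \<and> 0 \<le> L1 i S"
    and smooth: "\<forall>S\<in>set_pmf D. \<forall>X \<Gamma>. (\<forall>k. fst (e k) \<notin> S \<longrightarrow> \<Gamma> $ k = 0) \<longrightarrow>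
        f (X + \<Gamma>) - f X - grad X \<bullet> \<Gamma>
          \<le> (\<Sum>i\<in>S. (L0 i S + L1 i S * dual_norm (nrm i) (m i) (n i) (blk e m n (grad X) i)) / 2
                     * (nrm i (blk e m n \<Gamma> i))\<^sup>2)"
    and pin_pos: "\<forall>i<b. 0 < pin D i"
    and cexp_L1_pos: "\<forall>i<b. 0 < cexp D (L1 i) i"
begin

abbreviation gblk :: "real^'k \<Rightarrow> nat \<Rightarrow> (nat \<Rightarrow> nat \<Rightarrow> real)" where
  "gblk X i \<equiv> blk e m n (grad X) i"

abbreviation gnorm :: "real^'k \<Rightarrow> nat \<Rightarrow> real" where
  "gnorm X i \<equiv> dual_norm (nrm i) (m i) (n i) (gblk X i)"

abbreviation curv :: "nat set \<Rightarrow> real^'k \<Rightarrow> nat \<Rightarrow> real" where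
  "curv S X i \<equiv> L0 i S + L1 i S * gnorm X i"

abbreviation step :: "nat set \<Rightarrow> real^'k \<Rightarrow> real^'k" where
  "step \<equiv> bcd_step e m n nrm sharp grad L0 L1"

abbreviation weight :: "nat \<Rightarrow> real" where
  "weight i \<equiv> pin D i / cexp D (L1 i) i"

abbreviation L0_weighted :: real where
  "L0_weighted \<equiv> \<Sum>i<b. pin D i * cexp D (L0 i) i / (cexp D (L1 i) i)\<^sup>2"

abbreviation mean_weight :: real where
  "mean_weight \<equiv> (1 / real b) * (\<Sum>l<b. weight l)"

definition gain :: "nat set \<Rightarrow> real^'k \<Rightarrow> real" where
  "gain S X = (\<Sum>i\<in>S. (gnorm X i)\<^sup>2 / (2 * curv S X i))"

lemma finite_set_pmf_D: "finite (set_pmf D)"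
  by (rule finite_subset[OF D_sets]) simp

lemma blocks_below: "S \<in> set_pmf D \<Longrightarrow> S \<subseteq> {..<b}"
  using D_sets by auto

lemma gnorm_nonneg: "i < b \<Longrightarrow> 0 \<le> gnorm X i"
  using norms sharps dual_norm_nonneg blk_in_Mat by blast

lemma curv_nonneg:
  assumes "S \<in> set_pmf D" "i \<in> S"
  shows "0 \<le> curv S X i"
proof -
  have "i < b"
    using assms blocks_below by blast
  then show ?thesis
    using assms L_nonneg gnorm_nonneg[of i X] by simp
qed

lemma cexp_L0_nonneg: "i < b \<Longrightarrow> 0 \<le> cexp D (L0 i) i"
proof -
  assume i: "i < b"
  have "0 \<le> pin D i * cexp D (L0 i) i"
    unfolding pin_mult_cexp_eq_sum[OF finite_set_pmf_D pin_pos[rule_format, OF i]]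
    using L_nonneg i by (intro sum_nonneg) auto
  moreover have "0 < pin D i"
    using pin_pos i by blast
  ultimately show ?thesis
    by (simp add: zero_le_mult_iff)
qed

lemma f_add_assemble_le:
  assumes S: "S \<in> set_pmf D" and B: "\<forall>i\<in>S. B i \<in> Mat (m i) (n i)"
  shows "f (X + assemble (\<lambda>i. if i \<in> S then B i else (\<lambda>r c. 0)))
       \<le> f X + (\<Sum>i\<in>S. frob (m i) (n i) (gblk X i) (B i) + curv S X i / 2 * (nrm i (B i))\<^sup>2)"
proof -
  let ?\<Gamma> = "assemble (\<lambda>i. if i \<in> S then B i else (\<lambda>r c. 0))"
  have "grad X \<bullet> ?\<Gamma> = (\<Sum>i<b. frob (m i) (n i) (gblk X i) (if i \<in> S then B i else (\<lambda>r c. 0)))"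
    by (rule inner_assemble)
  also have "\<dots> = (\<Sum>i\<in>S. frob (m i) (n i) (gblk X i) (B i))"
    using blocks_below[OF S] by (intro sum.mono_neutral_cong_right) (auto simp: frob_zero_right)
  finally have "grad X \<bullet> ?\<Gamma> = \<dots>" .
  moreover have "blk e m n ?\<Gamma> i = B i" if "i \<in> S" for i
    using blk_assemble that B blocks_below[OF S] by auto
  ultimately show ?thesis
    using smooth[rule_format, OF S, of ?\<Gamma> X] assemble_outside by (simp add: sum.distrib)
qed

lemma step_eq_assemble:
  "step S X = X + assemble (\<lambda>i. if i \<in> S then (\<lambda>r c. (- inverse (curv S X i)) * sharp i (gblk X i) r c)
                                  else (\<lambda>r c. 0))"
  unfolding bcd_step_def assemble_def by (simp add: vec_eq_iff split: prod.splits)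

lemma f_step_le: "S \<in> set_pmf D \<Longrightarrow> f (step S X) \<le> f X - gain S X"
proof -
  assume S: "S \<in> set_pmf D"
  have in_range: "i < b" if "i \<in> S" for i
    using that blocks_below[OF S] by blast
  have sharp_in: "sharp i (gblk X i) \<in> Mat (m i) (n i)" if "i \<in> S" for i
    using in_range[OF that] sharps blk_in_Mat[of e m n "grad X" i] unfolding is_sharp_def by blast
  have "f (step S X) \<le> f X + (\<Sum>i\<in>S. frob (m i) (n i) (gblk X i) (\<lambda>r c. (- inverse (curv S X i)) * sharp i (gblk X i) r c)
      + curv S X i / 2 * (nrm i (\<lambda>r c. (- inverse (curv S X i)) * sharp i (gblk X i) r c))\<^sup>2)"
    unfolding step_eq_assemble using sharp_in by (intro f_add_assemble_le[OF S]) (simp add: Mat_def)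
  also have "\<dots> \<le> f X + (\<Sum>i\<in>S. - ((gnorm X i)\<^sup>2 / (2 * curv S X i)))"
  proof (intro add_left_mono sum_mono)
    fix i assume "i \<in> S"
    then show "frob (m i) (n i) (gblk X i) (\<lambda>r c. (- inverse (curv S X i)) * sharp i (gblk X i) r c)
        + curv S X i / 2 * (nrm i (\<lambda>r c. (- inverse (curv S X i)) * sharp i (gblk X i) r c))\<^sup>2
        \<le> - ((gnorm X i)\<^sup>2 / (2 * curv S X i))"
      using in_range norms sharps curv_nonneg[OF S]
      by (intro sharp_step_gain) (simp_all add: blk_in_Mat)
  qed
  finally show ?thesis
    by (simp add: gain_def sum_negf)
qed

text \<open>A block with zero curvature constant but nonzero gradient would admit arbitrarily long
  steps along its sharp with linear decrease, pushing f below fstar.\<close>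

lemma curv_pos:
  assumes S: "S \<in> set_pmf D" and i: "i \<in> S" and pos: "0 < gnorm X i"
  shows "0 < curv S X i"
proof (rule ccontr)
  assume "\<not> 0 < curv S X i"
  then have curv_zero: "curv S X i = 0"
    using curv_nonneg[OF S i, of X] by simp
  have in_range: "j < b" if "j \<in> S" for j
    using that blocks_below[OF S] by blast
  let ?s = "sharp i (gblk X i)"
  define F where "F = frob (m i) (n i) (gblk X i) ?s"
  have "(gnorm X i)\<^sup>2 \<le> 2 * F - (nrm i ?s)\<^sup>2"
    unfolding F_def using in_range[OF i] norms sharps by (intro dual_norm_sq_le_sharp_value) (auto simp: blk_in_Mat)
  moreover have "0 < (gnorm X i)\<^sup>2"
    using pos by simp
  ultimately have "0 < F"
    using zero_le_power2[of "nrm i ?s"] by linarith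
  define t where "t = - (f X - fstar + 1) / F"
  define B where "B j = (if j = i then (\<lambda>r c. t * ?s r c) else (\<lambda>r c. 0))" for j
  have "?s \<in> Mat (m i) (n i)"
    using in_range[OF i] sharps blk_in_Mat[of e m n "grad X" i] unfolding is_sharp_def by blast
  then have "\<forall>j\<in>S. B j \<in> Mat (m j) (n j)"
    by (simp add: B_def scale_in_Mat zero_in_Mat)
  then have "f (X + assemble (\<lambda>j. if j \<in> S then B j else (\<lambda>r c. 0)))
      \<le> f X + (\<Sum>j\<in>S. frob (m j) (n j) (gblk X j) (B j) + curv S X j / 2 * (nrm j (B j))\<^sup>2)"
    by (rule f_add_assemble_le[OF S])
  also have "(\<Sum>j\<in>S. frob (m j) (n j) (gblk X j) (B j) + curv S X j / 2 * (nrm j (B j))\<^sup>2)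
      = (\<Sum>j\<in>S. if j = i then t * F else 0)"
  proof (rule sum.cong)
    fix j assume "j \<in> S"
    then have "nrm j (\<lambda>r c. 0) = 0"
      using mat_norm_zero norms in_range by blast
    then show "frob (m j) (n j) (gblk X j) (B j) + curv S X j / 2 * (nrm j (B j))\<^sup>2
        = (if j = i then t * F else 0)"
      using curv_zero by (simp add: B_def F_def frob_scale_right frob_zero_right)
  qed simp
  also have "\<dots> = - (f X - fstar + 1)"
    using i \<open>0 < F\<close> finite_subset[OF blocks_below[OF S]] by (simp add: t_def)
  finally show False
    using lower[rule_format, of "X + assemble (\<lambda>j. if j \<in> S then B j else (\<lambda>r c. 0))"] by simp
qed

lemma gain_ge:
  assumes S: "S \<in> set_pmf D"
  shows "(\<Sum>i<b. if i \<in> S then 2 * l i * gnorm X i - (l i)\<^sup>2 * curv S X i else 0) \<le> 2 * gain S X"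
proof -
  have "(\<Sum>i<b. if i \<in> S then 2 * l i * gnorm X i - (l i)\<^sup>2 * curv S X i else 0)
      = (\<Sum>i\<in>S. 2 * l i * gnorm X i - (l i)\<^sup>2 * curv S X i)"
    using blocks_below[OF S] by (simp add: sum.inter_restrict[symmetric] Int_absorb1)
  also have "\<dots> \<le> (\<Sum>i\<in>S. (gnorm X i)\<^sup>2 / curv S X i)"
  proof (rule sum_mono)
    fix i assume i: "i \<in> S"
    then have "i < b"
      using blocks_below[OF S] by blast
    then show "2 * l i * gnorm X i - (l i)\<^sup>2 * curv S X i \<le> (gnorm X i)\<^sup>2 / curv S X i"
      by (intro quadratic_le_sq_div gnorm_nonneg curv_nonneg[OF S i] curv_pos[OF S i])
  qed
  also have "\<dots> = 2 * gain S X"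
  proof -
    have half: "2 * (x / (2 * y)) = x / y" for x y :: real
      by (cases "y = 0") (simp_all add: field_simps)
    show ?thesis
      unfolding gain_def sum_distrib_left half ..
  qed
  finally show ?thesis .
qed

lemma expected_gain_ge:
  "(2 * \<mu> - \<mu>\<^sup>2) * (\<Sum>i<b. weight i * gnorm X i) - \<mu>\<^sup>2 * L0_weighted
     \<le> 2 * (\<Sum>S\<in>set_pmf D. pmf D S * gain S X)"
proof -
  define l where "l i = \<mu> / cexp D (L1 i) i" for i
  have "(2 * \<mu> - \<mu>\<^sup>2) * (\<Sum>i<b. weight i * gnorm X i) - \<mu>\<^sup>2 * L0_weighted
      = (\<Sum>i<b. pin D i * (2 * l i * gnorm X i - (l i)\<^sup>2 * (cexp D (L0 i) i + cexp D (L1 i) i * gnorm X i)))"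
    unfolding sum_distrib_left sum_subtractf[symmetric]
  proof (rule sum.cong)
    fix i assume "i \<in> {..<b}"
    then have "cexp D (L1 i) i \<noteq> 0"
      using cexp_L1_pos by (simp add: less_imp_neq[symmetric])
    then show "(2 * \<mu> - \<mu>\<^sup>2) * (weight i * gnorm X i) - \<mu>\<^sup>2 * (pin D i * cexp D (L0 i) i / (cexp D (L1 i) i)\<^sup>2)
        = pin D i * (2 * l i * gnorm X i - (l i)\<^sup>2 * (cexp D (L0 i) i + cexp D (L1 i) i * gnorm X i))"
      unfolding l_def by (simp add: field_simps power2_eq_square)
  qed simp
  also have "\<dots> = (\<Sum>i<b. \<Sum>S\<in>set_pmf D. pmf D S
      * (if i \<in> S then 2 * l i * gnorm X i - (l i)\<^sup>2 * curv S X i else 0))"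
    using pin_pos by (intro sum.cong) (simp_all add: expect_block_quadratic[OF finite_set_pmf_D])
  also have "\<dots> = (\<Sum>S\<in>set_pmf D. pmf D S
      * (\<Sum>i<b. if i \<in> S then 2 * l i * gnorm X i - (l i)\<^sup>2 * curv S X i else 0))"
    by (simp add: sum_distrib_left) (rule sum.swap)
  also have "\<dots> \<le> (\<Sum>S\<in>set_pmf D. pmf D S * (2 * gain S X))"
    by (intro sum_mono mult_left_mono gain_ge) auto
  finally show ?thesis
    by (simp add: sum_distrib_left algebra_simps)
qed

lemma sum_expected_weighted_gnorm_le:
  "(\<Sum>j<K. (2 * \<mu> - \<mu>\<^sup>2) * expect_iter D step j (\<lambda>X. \<Sum>i<b. weight i * gnorm X i) X0 - \<mu>\<^sup>2 * L0_weighted)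
     \<le> 2 * (f X0 - fstar)"
proof -
  have "(\<Sum>j<K. (2 * \<mu> - \<mu>\<^sup>2) * expect_iter D step j (\<lambda>X. \<Sum>i<b. weight i * gnorm X i) X0 - \<mu>\<^sup>2 * L0_weighted)
      = (\<Sum>j<K. expect_iter D step j
           (\<lambda>X. (2 * \<mu> - \<mu>\<^sup>2) * (\<Sum>i<b. weight i * gnorm X i) + - (\<mu>\<^sup>2 * L0_weighted)) X0)"
    by (intro sum.cong refl)
      (simp only: expect_iter_add expect_iter_cmult expect_iter_const[OF finite_set_pmf_D] diff_conv_add_uminus)
  also have "\<dots> \<le> (\<Sum>j<K. expect_iter D step j (\<lambda>X. 2 * (\<Sum>S\<in>set_pmf D. pmf D S * gain S X)) X0)"
    using expected_gain_ge by (intro sum_mono expect_iter_mono) simp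
  also have "\<dots> = 2 * (\<Sum>j<K. expect_iter D step j (\<lambda>X. \<Sum>S\<in>set_pmf D. pmf D S * gain S X) X0)"
    by (simp only: expect_iter_cmult sum_distrib_left[symmetric])
  also have "\<dots> \<le> 2 * (f X0 - fstar)"
  proof -
    have "(\<Sum>j<K. expect_iter D step j (\<lambda>X. \<Sum>S\<in>set_pmf D. pmf D S * gain S X) X0) \<le> f X0 - fstar"
      using sum_expect_iter_decrease_le[where F = f and step = step and \<phi> = gain, OF finite_set_pmf_D f_step_le]
        lower by blast
    then show ?thesis
      by (rule mult_left_mono) simp
  qed
  finally show ?thesis .
qed

lemma ex_iterate_weighted_gnorm_le:
  assumes b: "0 < b" and \<epsilon>: "0 < \<epsilon>" and K: "0 < K"
    and K_bound: "2 * (f X0 - fstar) * L0_weighted / (\<epsilon>\<^sup>2 * mean_weight\<^sup>2)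
                  + 2 * (f X0 - fstar) / (\<epsilon> * mean_weight) \<le> real K"
  shows "\<exists>j<K. (\<Sum>i<b. weight i / mean_weight
                  * (\<integral>\<omega>. gnorm (bcd_iter e m n nrm sharp grad L0 L1 X0 \<omega> j) i \<partial>stream_space (measure_pmf D)))
              \<le> \<epsilon>"
proof -
  let ?a = "\<lambda>j. expect_iter D step j (\<lambda>X. \<Sum>i<b. weight i * gnorm X i) X0"
  have weight_pos: "0 < weight i" if "i < b" for i
    using that pin_pos cexp_L1_pos by simp
  then have W: "0 < mean_weight"
    using b by (intro mult_pos_pos sum_pos) auto
  have C: "0 \<le> L0_weighted"
    using pin_pos cexp_L0_nonneg by (intro sum_nonneg divide_nonneg_nonneg mult_nonneg_nonneg) auto
  have clear_denominators: "2 * \<delta> * (C + t) \<le> k * t\<^sup>2"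
    if "2 * \<delta> * C / t\<^sup>2 + 2 * \<delta> / t \<le> k" "0 < t" for \<delta> C t k :: real
    using that by (simp add: field_simps power2_eq_square)
  have K_bound': "2 * (f X0 - fstar) * (L0_weighted + \<epsilon> * mean_weight) \<le> real K * (\<epsilon> * mean_weight)\<^sup>2"
    using K_bound \<epsilon> W by (intro clear_denominators) (simp_all only: power_mult_distrib mult_pos_pos)
  from C mult_pos_pos[OF \<epsilon> W] K K_bound' sum_expected_weighted_gnorm_le
  have "\<exists>j<K. ?a j \<le> \<epsilon> * mean_weight"
    by (rule ex_le_of_sum_quadratic_le)
  then obtain j where j: "j < K" "?a j \<le> \<epsilon> * mean_weight"
    by blast
  have "(\<Sum>i<b. weight i / mean_weight
          * (\<integral>\<omega>. gnorm (bcd_iter e m n nrm sharp grad L0 L1 X0 \<omega> j) i \<partial>stream_space (measure_pmf D)))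
      \<le> (\<Sum>i<b. weight i / mean_weight * expect_iter D step j (\<lambda>X. gnorm X i) X0)"
    unfolding bcd_iter_eq_fold using weight_pos W
    by (intro sum_mono mult_left_mono integral_fold_stream_le[OF finite_set_pmf_D] gnorm_nonneg
        divide_nonneg_pos less_imp_le) auto
  also have "\<dots> = ?a j / mean_weight"
    unfolding expect_iter_sum[OF finite_lessThan] expect_iter_cmult sum_divide_distrib by (simp add: ac_simps)
  also have "\<dots> \<le> \<epsilon>"
    by (subst pos_divide_le_eq[OF W]) (rule j(2))
  finally show ?thesis
    using j(1) by blast
qed

end

theorem theorem6:
  fixes b :: nat and m n :: "nat \<Rightarrow> nat"
    and e :: "'k::finite \<Rightarrow> nat \<times> nat \<times> nat"
    and nrm :: "nat \<Rightarrow> (nat \<Rightarrow> nat \<Rightarrow> real) \<Rightarrow> real"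
    and sharp :: "nat \<Rightarrow> (nat \<Rightarrow> nat \<Rightarrow> real) \<Rightarrow> (nat \<Rightarrow> nat \<Rightarrow> real)"
    and f :: "real^'k \<Rightarrow> real" and grad :: "real^'k \<Rightarrow> real^'k" and fstar :: real
    and D :: "nat set pmf" and L0 L1 :: "nat \<Rightarrow> nat set \<Rightarrow> real"
    and X0 :: "real^'k" and \<epsilon> :: real and K :: nat
  assumes e_bij: "bij_betw e UNIV {(i, r, c). i < b \<and> r < m i \<and> c < n i}"
    and norms: "\<forall>i<b. is_mat_norm (nrm i) (m i) (n i)"
    and sharps: "\<forall>i<b. is_sharp (nrm i) (m i) (n i) (sharp i)"
    and grad: "\<forall>X. (f has_derivative (\<lambda>H. grad X \<bullet> H)) (at X)"
    and grad_cont: "continuous_on UNIV grad"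
    and lower: "\<forall>X. fstar \<le> f X"
    and D_sets: "set_pmf D \<subseteq> Pow {..<b}"
    and L_nonneg: "\<forall>S\<in>set_pmf D. \<forall>i<b. 0 \<le> L0 i S \<and> 0 \<le> L1 i S"
    and smooth: "\<forall>S\<in>set_pmf D. \<forall>X \<Gamma>. (\<forall>k. fst (e k) \<notin> S \<longrightarrow> \<Gamma> $ k = 0) \<longrightarrow>
        f (X + \<Gamma>) - f X - grad X \<bullet> \<Gamma>
          \<le> (\<Sum>i\<in>S. (L0 i S + L1 i S * dual_norm (nrm i) (m i) (n i) (blk e m n (grad X) i)) / 2
                     * (nrm i (blk e m n \<Gamma> i))\<^sup>2)"
    and pin_pos: "\<forall>i<b. 0 < pin D i"
    and cexp_pos: "\<forall>i<b. 0 < cexp D (L1 i) i"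
    and eps: "0 < \<epsilon>"
    and K_pos: "0 < K"
    and K_bound: "\<lceil>2 * (f X0 - fstar) * (\<Sum>i<b. pin D i * cexp D (L0 i) i / (cexp D (L1 i) i)\<^sup>2)
                   / (\<epsilon>\<^sup>2 * ((1 / real b) * (\<Sum>l<b. pin D l / cexp D (L1 l) l))\<^sup>2)
                 + 2 * (f X0 - fstar) / (\<epsilon> * ((1 / real b) * (\<Sum>l<b. pin D l / cexp D (L1 l) l)))\<rceil>
                 \<le> int K"
  shows "Min ((\<lambda>k. \<Sum>i<b. (pin D i / cexp D (L1 i) i)
                   / ((1 / real b) * (\<Sum>l<b. pin D l / cexp D (L1 l) l))
              * (\<integral>\<omega>. dual_norm (nrm i) (m i) (n i)
                     (blk e m n (grad (bcd_iter e m n nrm sharp grad L0 L1 X0 \<omega> k)) i)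
                  \<partial>stream_space (measure_pmf D))) ` {..<K})
         \<le> \<epsilon>"
proof -
  interpret block_descent b m n e nrm sharp f grad fstar D L0 L1
    using e_bij norms sharps lower D_sets L_nonneg smooth pin_pos cexp_pos by unfold_locales
  have "\<exists>j<K. (\<Sum>i<b. weight i / mean_weight
              * (\<integral>\<omega>. gnorm (bcd_iter e m n nrm sharp grad L0 L1 X0 \<omega> j) i \<partial>stream_space (measure_pmf D)))
            \<le> \<epsilon>"
  proof (cases "b = 0")
    case True
    then show ?thesis
      using K_pos eps by auto
  next
    case False
    then show ?thesis
      using ex_iterate_weighted_gnorm_le eps K_pos K_bound unfolding ceiling_le_iff by simp
  qed
  then show ?thesis
    by (auto intro: order_trans[OF Min_le])
qed

end
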